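(* Let $p$ be a prime and $b$ an integer with $0<b<p$. If $S^G_{1,b}$ is generated by 4 invariants (so $R=\mathbb{C}[y_0,y_1,y_2,y_3]$), then the free resolution of $R/\ker\varphi_{1,b}$ is $$R\xleftarrow{\ \partial_1\ } R(-(2p-b^{-1}+1))\oplus R(-(2p-b+1))\oplus R(-2p)\xleftarrow{\ \partial_2\ } R(-(3p-b^{-1}+1))\oplus R(-(3p-b+1))\leftarrow 0,$$ where $\partial_1=\begin{bmatrix} y_1^{p-b^{-1}}-y_0y_2 & y_2^{p-b}-y_1y_3 & y_1^{p-b^{-1}-1}y_2^{p-b-1}-y_0y_3\end{bmatrix}$ and $$\partial_2=\begin{bmatrix}-y_3 & -y_2^{p-b-1}\\ -y_1^{p-b^{-1}-1} & -y_0\\ y_2 & y_1\end{bmatrix}.$$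
   Context: Let $S=\mathbb{C}[x_1,x_2]$ (standard grading), $\zeta=e^{2\pi i/p}$, $G=\mathbb{Z}/p\mathbb{Z}=\langle\zeta\rangle$ acting on $S$ by $x_1\mapsto\zeta x_1$, $x_2\mapsto\zeta^bx_2$, with invariant ring $S^G_{1,b}$ (spanned by monomials $x_1^cx_2^d$ with $c+bd\equiv0\pmod p$). $\mathrm{inv}_{1,b}$ denotes the minimal set of monomial generators of $S^G_{1,b}$ as a $\mathbb{C}$-algebra: the nonconstant invariant monomials that are not a product of two nonconstant invariant monomials; "generated by 4 invariants" means $|\mathrm{inv}_{1,b}|=4$. Writing $\mathrm{inv}_{1,b}=\{z_0,\dots,z_n\}$ in lexicographic order with $x_1>x_2$, $R=\mathbb{C}[y_0,\dots,y_n]$ is graded by $\deg y_i=\deg z_i$ (total degree in $x_1,x_2$), and $\varphi_{1,b}:R\to S^G_{1,b}$ is the $\mathbb{C}$-algebra map $y_i\mapsto z_i$. $R(-d)$ denotes $R$ with grading shifted by $d$. $b^{-1}$ is the unique integer $0<b^{-1}<p$ with $bb^{-1}\equiv1\pmod p$. *)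

theory Defs
  imports Complex_Main "HOL-Library.Poly_Mapping" "HOL-Library.Numeral_Type"
          "HOL-Library.Product_Lexorder" "HOL-Computational_Algebra.Primes"
begin

(* Polynomial rings.  S = C[x1,x2]: variables 0 (= x1) and 1 (= x2) of type nat.
   R = C[y0,y1,y2,y3]: variables of the 4-element type 4 (elements 0,1,2,3). *)
type_synonym Spoly = "(nat \<Rightarrow>\<^sub>0 nat) \<Rightarrow>\<^sub>0 complex"
type_synonym Rpoly = "(4 \<Rightarrow>\<^sub>0 nat) \<Rightarrow>\<^sub>0 complex"

(* x1^c x2^d is invariant under x1 -> zeta x1, x2 -> zeta^b x2 iff c + b d = 0 mod p *)
definition is_invariant :: "nat \<Rightarrow> nat \<Rightarrow> nat \<times> nat \<Rightarrow> bool" where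
  "is_invariant p b e \<longleftrightarrow> (fst e + b * snd e) mod p = 0"

definition inv_gens :: "nat \<Rightarrow> nat \<Rightarrow> (nat \<times> nat) set" where
  "inv_gens p b = {e. e \<noteq> (0,0) \<and> is_invariant p b e \<and>
     \<not> (\<exists>e1 e2. e1 \<noteq> (0,0) \<and> e2 \<noteq> (0,0) \<and> is_invariant p b e1 \<and> is_invariant p b e2
            \<and> fst e = fst e1 + fst e2 \<and> snd e = snd e1 + snd e2)}"

(* z_0, ..., z_n in lexicographic order with x1 > x2 (z_0 the largest) *)
definition zs :: "nat \<Rightarrow> nat \<Rightarrow> (nat \<times> nat) list" where
  "zs p b = rev (sorted_list_of_set (inv_gens p b))"

definition xmon :: "nat \<times> nat \<Rightarrow> Spoly" where
  "xmon e = Poly_Mapping.single (Poly_Mapping.single 0 (fst e) + Poly_Mapping.single 1 (snd e)) 1"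

definition var_index :: "4 \<Rightarrow> nat" where
  "var_index v = (if v = 0 then 0 else if v = 1 then 1 else if v = 2 then 2 else 3)"

definition zdeg :: "nat \<Rightarrow> nat \<Rightarrow> nat \<Rightarrow> nat" where
  "zdeg p b i = fst (zs p b ! i) + snd (zs p b ! i)"

(* the C-algebra map phi_{1,b} : R -> S, y_i |-> z_i *)
definition phi :: "nat \<Rightarrow> nat \<Rightarrow> Rpoly \<Rightarrow> Spoly" where
  "phi p b f = (\<Sum>m\<in>Poly_Mapping.keys f. Poly_Mapping.single (0 :: nat \<Rightarrow>\<^sub>0 nat) (Poly_Mapping.lookup f m) *
       (\<Prod>v\<in>Poly_Mapping.keys (m :: 4 \<Rightarrow>\<^sub>0 nat). xmon (zs p b ! var_index v) ^ Poly_Mapping.lookup m v))"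

definition y :: "4 \<Rightarrow> Rpoly" where
  "y v = Poly_Mapping.single (Poly_Mapping.single v 1) 1"

(* grading of R: deg y_i = deg z_i *)
definition wdeg :: "nat \<Rightarrow> nat \<Rightarrow> (4 \<Rightarrow>\<^sub>0 nat) \<Rightarrow> nat" where
  "wdeg p b m = (\<Sum>v\<in>Poly_Mapping.keys m. Poly_Mapping.lookup m v * zdeg p b (var_index v))"

definition homog :: "nat \<Rightarrow> nat \<Rightarrow> Rpoly \<Rightarrow> int \<Rightarrow> bool" where
  "homog p b f d \<longleftrightarrow> (\<forall>m\<in>Poly_Mapping.keys f. int (wdeg p b m) = d)"

definition binv :: "nat \<Rightarrow> nat \<Rightarrow> nat" where
  "binv p b = (THE c. 0 < c \<and> c < p \<and> (b * c) mod p = 1)"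

definition D1 :: "nat \<Rightarrow> nat \<Rightarrow> nat \<Rightarrow> Rpoly" where
  "D1 p b i = (if i = 0 then y 1 ^ (p - binv p b) - y 0 * y 2
               else if i = 1 then y 2 ^ (p - b) - y 1 * y 3
               else y 1 ^ (p - binv p b - 1) * y 2 ^ (p - b - 1) - y 0 * y 3)"

definition D2 :: "nat \<Rightarrow> nat \<Rightarrow> nat \<Rightarrow> nat \<Rightarrow> Rpoly" where
  "D2 p b i j = (if i = 0 then (if j = 0 then - y 3 else - (y 2 ^ (p - b - 1)))
                 else if i = 1 then (if j = 0 then - (y 1 ^ (p - binv p b - 1)) else - y 0)
                 else (if j = 0 then y 2 else y 1))"

(* the maps R^3 -> R and R^2 -> R^3 (column vectors as tuples) *)
definition partial1 :: "nat \<Rightarrow> nat \<Rightarrow> Rpoly \<times> Rpoly \<times> Rpoly \<Rightarrow> Rpoly" where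
  "partial1 p b a = D1 p b 0 * fst a + D1 p b 1 * fst (snd a) + D1 p b 2 * snd (snd a)"

definition partial2 :: "nat \<Rightarrow> nat \<Rightarrow> Rpoly \<times> Rpoly \<Rightarrow> Rpoly \<times> Rpoly \<times> Rpoly" where
  "partial2 p b u = (D2 p b 0 0 * fst u + D2 p b 0 1 * snd u,
                     D2 p b 1 0 * fst u + D2 p b 1 1 * snd u,
                     D2 p b 2 0 * fst u + D2 p b 2 1 * snd u)"

(* twists: F1 = R(-dg1!0) + R(-dg1!1) + R(-dg1!2), F2 = R(-dg2!0) + R(-dg2!1) *)
definition dg1 :: "nat \<Rightarrow> nat \<Rightarrow> int list" where
  "dg1 p b = [2 * int p - int (binv p b) + 1, 2 * int p - int b + 1, 2 * int p]"

definition dg2 :: "nat \<Rightarrow> nat \<Rightarrow> int list" where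
  "dg2 p b = [3 * int p - int (binv p b) + 1, 3 * int p - int b + 1]"

end

(* When the invariant ring has exactly four minimal generators, they are x1^p, x1^c x2, x1 x2^a and
   x2^p with c = p - b, a = p - b^-1 and a * c = p + 1.  Hence phi maps the monomial y^m to an
   x-monomial whose exponent depends linearly on m.  Modulo the three binomials D1 every y-monomial
   rewrites to a standard one (divisible by none of their lead monomials y0 y2, y1 y3, y0 y3), and
   phi is injective on standard monomials; so the binomials generate the kernel of phi.
   The binomials D1 are the 2 x 2 minors of the matrix D2.  The lead monomials of the first two
   are coprime, so the first is a nonzerodivisor modulo the second, and the Hilbert-Burch argument
   identifies the kernel of partial1 with the image of partial2; partial2 is injective because one
   of its minors is nonzero. *)

theory Submission
  imports Defs "HOL-Number_Theory.Cong" "HOL-Library.Product_Plus"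
begin

section \<open>The minimal invariant monomials\<close>

lemma binv_spec:
  assumes "prime p" "0 < b" "b < p"
  shows "0 < binv p b \<and> binv p b < p \<and> (b * binv p b) mod p = 1"
proof -
  have p1: "1 < p" using assms(1) prime_gt_1_nat by blast
  have "\<not> p dvd b" using assms(2,3) by (auto dest: dvd_imp_le)
  then have cop: "coprime b p" using prime_imp_coprime[OF assms(1)] by (simp add: coprime_commute)
  then obtain B where "[b * B = 1] (mod p)" using cong_solve_coprime_nat by auto
  then have B: "(b * (B mod p)) mod p = 1"
    using p1 by (simp add: cong_def mod_mult_right_eq)
  then have spec: "0 < B mod p \<and> B mod p < p \<and> (b * (B mod p)) mod p = 1"
    using p1 by (cases "B mod p = 0") auto
  have unique: "c = B mod p" if c: "0 < c \<and> c < p \<and> (b * c) mod p = 1" for c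
  proof -
    have "[b * c = b * (B mod p)] (mod p)" using c B unfolding cong_def by simp
    then have "[c = B mod p] (mod p)" by (rule cong_mult_lcancel_nat[OF cop, THEN iffD1])
    then show ?thesis using c unfolding cong_def by simp
  qed
  have "binv p b = B mod p" unfolding binv_def by (rule the_equality, rule spec, erule unique)
  then show ?thesis using spec by simp
qed

lemma is_invariant_iff_dvd: "is_invariant p b e \<longleftrightarrow> p dvd fst e + b * snd e"
  unfolding is_invariant_def by (rule dvd_eq_mod_eq_0[symmetric])

lemma is_invariant_diff:
  assumes "is_invariant p b e" "is_invariant p b e'" "fst e' \<le> fst e" "snd e' \<le> snd e"
  shows "is_invariant p b (e - e')"
proof -
  have "fst (e - e') + b * snd (e - e') = (fst e + b * snd e) - (fst e' + b * snd e')"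
    using assms(3,4) by (simp add: diff_mult_distrib2)
  then show ?thesis using assms(1,2) unfolding is_invariant_iff_dvd by (simp add: dvd_diff_nat)
qed

lemma is_invariant_x_axis_ge: "is_invariant p b (x, 0) \<Longrightarrow> x \<noteq> 0 \<Longrightarrow> p \<le> x"
  unfolding is_invariant_iff_dvd by (auto dest: dvd_imp_le)

lemma is_invariant_y_axis_ge:
  assumes "prime p" "0 < b" "b < p" "is_invariant p b (0, t)" "t \<noteq> 0"
  shows "p \<le> t"
proof -
  have "\<not> p dvd b" using assms(2,3) by (auto dest: dvd_imp_le)
  then have "p dvd t" using assms(1,4) unfolding is_invariant_iff_dvd by (simp add: prime_dvd_mult_iff)
  then show ?thesis using assms(5) by (auto dest: dvd_imp_le)
qed

lemma inv_gens_iff: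
  "e \<in> inv_gens p b \<longleftrightarrow> e \<noteq> 0 \<and> is_invariant p b e \<and>
     \<not> (\<exists>e1 e2. e1 \<noteq> 0 \<and> e2 \<noteq> 0 \<and> is_invariant p b e1 \<and> is_invariant p b e2 \<and> e = e1 + e2)"
  unfolding inv_gens_def zero_prod_def by (auto simp: prod_eq_iff)

lemma inv_gens_minimal:
  assumes "e \<in> inv_gens p b" "is_invariant p b e'" "e' \<noteq> 0" "fst e' \<le> fst e" "snd e' \<le> snd e"
  shows "e' = e"
proof (rule ccontr)
  assume "e' \<noteq> e"
  then have "e - e' \<noteq> 0" using assms(4,5) by (auto simp: prod_eq_iff)
  moreover have "e = e' + (e - e')" using assms(4,5) by (simp add: prod_eq_iff)
  ultimately show False
    using assms is_invariant_diff[of p b e e'] unfolding inv_gens_iff by blast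
qed

text \<open>A splitting would put one factor on an axis, where invariant exponents are at least \<open>p\<close>.\<close>

lemma small_invariant_in_inv_gens:
  assumes "prime p" "0 < b" "b < p" "is_invariant p b (x, t)" "(x, t) \<noteq> 0"
    and "x \<le> p" "t \<le> p" "x \<le> 1 \<or> t \<le> 1"
  shows "(x, t) \<in> inv_gens p b"
  unfolding inv_gens_iff
proof (intro conjI notI)
  have shape: "(u = 0 \<and> p \<le> v) \<or> (v = 0 \<and> p \<le> u) \<or> (1 \<le> u \<and> 1 \<le> v)"
    if "is_invariant p b (u, v)" "(u, v) \<noteq> 0" for u v
    using that is_invariant_x_axis_ge is_invariant_y_axis_ge[OF assms(1-3)]
    by (cases "u = 0"; cases "v = 0") (auto simp: zero_prod_def)
  assume "\<exists>e1 e2. e1 \<noteq> 0 \<and> e2 \<noteq> 0 \<and> is_invariant p b e1 \<and> is_invariant p b e2 \<and> (x, t) = e1 + e2"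
  then obtain x1 t1 x2 t2 where split: "(x1, t1) \<noteq> 0" "(x2, t2) \<noteq> 0"
      "is_invariant p b (x1, t1)" "is_invariant p b (x2, t2)" "x = x1 + x2" "t = t1 + t2"
    by fastforce
  have "1 < p" using assms(1) prime_gt_1_nat by blast
  then show False
    using shape[OF split(3,1)] shape[OF split(4,2)] split(5,6) assms(6-8) by (elim disjE) linarith+
qed (use assms(4,5) in auto)

lemma four_monomials_in_inv_gens:
  assumes "prime p" "0 < b" "b < p"
  shows "{(p, 0), (p - b, 1), (1, p - binv p b), (0, p)} \<subseteq> inv_gens p b"
proof -
  let ?B = "binv p b" and ?q = "b * binv p b div p"
  have B: "0 < ?B" "?B < p" "(b * ?B) mod p = 1" using binv_spec[OF assms] by auto
  have "b * ?B = ?q * p + 1" using B(3) by (metis div_mult_mod_eq)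
  then have "int (b * ?B) = int (?q * p + 1)" by (rule arg_cong)
  then have "int b * int ?B = int ?q * int p + 1" by simp
  then have "int (1 + b * (p - ?B)) = int p * (int b - int ?q)"
    using B(2) by (simp add: of_nat_diff right_diff_distrib algebra_simps)
  then have "int p dvd int (1 + b * (p - ?B))" by (rule ssubst) (rule dvd_triv_left)
  then have "is_invariant p b (1, p - ?B)" unfolding is_invariant_iff_dvd by (simp only: of_nat_dvd_iff fst_conv snd_conv)
  moreover have "is_invariant p b (p, 0)" "is_invariant p b (0, p)" "is_invariant p b (p - b, 1)"
    using assms(3) by (simp_all add: is_invariant_iff_dvd)
  moreover have "(x, t) \<in> inv_gens p b"
    if "is_invariant p b (x, t)" "x \<noteq> 0 \<or> t \<noteq> 0" "x \<le> p" "t \<le> p" "x \<le> 1 \<or> t \<le> 1" for x t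
    using small_invariant_in_inv_gens[OF assms] that by (simp add: zero_prod_def)
  ultimately show ?thesis using assms by simp
qed

lemma inv_gens_minus_one:
  assumes "prime p"
  shows "inv_gens p (p - 1) \<subseteq> {(p, 0), (1, 1), (0, p)}"
proof
  fix e assume e: "e \<in> inv_gens p (p - 1)"
  have p1: "1 < p" using assms prime_gt_1_nat by blast
  obtain x t where xt: "e = (x, t)" by fastforce
  have inv: "is_invariant p (p - 1) (x, t)" and nz: "x \<noteq> 0 \<or> t \<noteq> 0"
    using e xt unfolding inv_gens_iff by (auto simp: zero_prod_def)
  have gens: "is_invariant p (p - 1) (1, 1)" "is_invariant p (p - 1) (p, 0)" "is_invariant p (p - 1) (0, p)"
    using p1 by (simp_all add: is_invariant_iff_dvd)
  consider "1 \<le> x" "1 \<le> t" | "t = 0" "x \<noteq> 0" | "x = 0" "t \<noteq> 0" using nz by linarith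
  then show "e \<in> {(p, 0), (1, 1), (0, p)}"
  proof cases
    case 1
    have "(1, 1) = e" by (rule inv_gens_minimal[OF e gens(1)]) (use 1 xt in \<open>auto simp: zero_prod_def\<close>)
    then show ?thesis by simp
  next
    case 2
    have "p \<le> x" using is_invariant_x_axis_ge[of p "p - 1" x] inv 2 by simp
    then have "(p, 0) = e"
      by (intro inv_gens_minimal[OF e gens(2)]) (use 2 xt p1 in \<open>auto simp: zero_prod_def\<close>)
    then show ?thesis by simp
  next
    case 3
    have "p \<le> t" using is_invariant_y_axis_ge[of p "p - 1" t] assms inv 3 p1 by simp
    then have "(0, p) = e"
      by (intro inv_gens_minimal[OF e gens(3)]) (use 3 xt p1 in \<open>auto simp: zero_prod_def\<close>)
    then show ?thesis by simp
  qed
qed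

lemma is_invariant_in_submonoid:
  assumes "0 \<in> M" "inv_gens p b \<subseteq> M" "\<And>e e'. e \<in> M \<Longrightarrow> e' \<in> M \<Longrightarrow> e + e' \<in> M"
    and "is_invariant p b e"
  shows "e \<in> M"
  using assms(4)
proof (induction "fst e + snd e" arbitrary: e rule: less_induct)
  case less
  show ?case
  proof (cases "e = 0 \<or> e \<in> inv_gens p b")
    case True
    then show ?thesis using assms(1,2) by blast
  next
    case False
    then obtain e1 e2 where split: "e1 \<noteq> 0" "e2 \<noteq> 0" "is_invariant p b e1" "is_invariant p b e2"
      "e = e1 + e2"
      using less.prems unfolding inv_gens_iff by blast
    then have "fst e1 + snd e1 < fst e + snd e" "fst e2 + snd e2 < fst e + snd e"
      by (auto simp: prod_eq_iff)
    then have "e1 \<in> M" "e2 \<in> M" using less.hyps split(3,4) by blast+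
    then show ?thesis using assms(3) split(5) by blast
  qed
qed

lemma inv_gens_card_four:
  assumes "prime p" "0 < b" "b < p" "card (inv_gens p b) = 4"
  shows "inv_gens p b = {(p, 0), (p - b, 1), (1, p - binv p b), (0, p)}"
    and "2 \<le> p - b" and "2 \<le> p - binv p b"
proof -
  have fin: "finite (inv_gens p b)" using assms(4) card_ge_0_finite by force
  have four: "{(p, 0), (p - b, 1), (1, p - binv p b), (0, p)} \<subseteq> inv_gens p b"
    by (rule four_monomials_in_inv_gens[OF assms(1-3)])
  show c2: "2 \<le> p - b"
  proof (rule ccontr)
    assume "\<not> 2 \<le> p - b"
    then have "b = p - 1" using assms(3) by linarith
    then have "inv_gens p b \<subseteq> {(p, 0), (1, 1), (0, p)}" using inv_gens_minus_one[OF assms(1)] by simp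
    then have "card (inv_gens p b) \<le> card {(p, 0), (1::nat, 1::nat), (0, p)}" by (rule card_mono[rotated]) simp
    also have "\<dots> \<le> 3" by (simp add: card_insert_if)
    finally show False using assms(4) by simp
  qed
  show a2: "2 \<le> p - binv p b"
  proof (rule ccontr)
    assume "\<not> 2 \<le> p - binv p b"
    moreover have "binv p b < p" using binv_spec[OF assms(1-3)] by blast
    ultimately have "p - binv p b = 1" by linarith
    moreover have "(1, p - binv p b) \<in> inv_gens p b" using four by blast
    then have "is_invariant p b (1, p - binv p b)" unfolding inv_gens_iff by blast
    ultimately have "p dvd 1 + b" by (simp add: is_invariant_iff_dvd)
    then have "p = 1 + b" using assms(3) by (auto dest: dvd_imp_le)
    then show False using c2 by simp
  qed
  have "distinct [(p, 0), (p - b, 1), (1, p - binv p b), (0, p)]" using a2 c2 assms(3) by auto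
  from distinct_card[OF this] have "card {(p, 0), (p - b, 1), (1, p - binv p b), (0, p)} = 4" by simp
  then show "inv_gens p b = {(p, 0), (p - b, 1), (1, p - binv p b), (0, p)}"
    using card_subset_eq[OF fin four] assms(4) by simp
qed

lemma four_generators_product_ge:
  assumes "prime p" "0 < b" "b < p"
    and c: "c = p - b" and a: "a = p - binv p b" and "2 \<le> a" "2 \<le> c"
  shows "p + 1 \<le> a * c"
proof -
  let ?B = "binv p b"
  have B: "?B < p" "(b * ?B) mod p = 1" using binv_spec[OF assms(1-3)] by auto
  have ia: "int a = int p - int ?B" and ic: "int c = int p - int b"
    using B(1) assms(3) unfolding a c by auto
  have "int (a * c) = int (b * ?B) + int p * (int p - int ?B - int b)"
    unfolding of_nat_mult ia ic by (simp add: algebra_simps)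
  then have "int (a * c) mod int p = int (b * ?B) mod int p" by simp
  then have ac_mod: "(a * c) mod p = 1" using B(2) by (metis of_nat_mod of_nat_eq_iff of_nat_1)
  have "4 \<le> a * c" using mult_le_mono[OF assms(6,7)] by simp
  moreover have ac: "a * c = a * c div p * p + 1" using ac_mod by (metis div_mult_mod_eq)
  ultimately have "a * c div p \<noteq> 0" by (intro notI) simp
  then have "p \<le> a * c div p * p" by simp
  with ac show ?thesis by linarith
qed

text \<open>The invariant exponent \<open>(1 + b, a - 1)\<close> is a sum of generators; its second coordinate leaves
  room only for \<open>a - 1\<close> copies of \<open>(c, 1)\<close>, whose first coordinates then sum to at most \<open>1 + b\<close>.\<close>

lemma four_generators_product_le:
  assumes "prime p" "0 < b" "b < p"
    and gens: "inv_gens p b = {(p, 0), (c, 1), (1, a), (0, p)}"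
    and c: "c = p - b" and a: "a = p - binv p b" and "2 \<le> a"
  shows "a * c \<le> p + 1"
proof -
  define M where "M = {(\<alpha> * p + \<beta> * c + \<gamma>, \<beta> + \<gamma> * a + \<delta> * p) | \<alpha> \<beta> \<gamma> \<delta>. True}"
  have M_add: "e + e' \<in> M" if e: "e \<in> M" and e': "e' \<in> M" for e e'
  proof -
    obtain \<alpha> \<beta> \<gamma> \<delta> \<alpha>' \<beta>' \<gamma>' \<delta>' where
      "e = (\<alpha> * p + \<beta> * c + \<gamma>, \<beta> + \<gamma> * a + \<delta> * p)"
      "e' = (\<alpha>' * p + \<beta>' * c + \<gamma>', \<beta>' + \<gamma>' * a + \<delta>' * p)"
      using e e' unfolding M_def by blast
    then have "e + e' = ((\<alpha> + \<alpha>') * p + (\<beta> + \<beta>') * c + (\<gamma> + \<gamma>'),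
                         (\<beta> + \<beta>') + (\<gamma> + \<gamma>') * a + (\<delta> + \<delta>') * p)"
      by (simp add: algebra_simps)
    then show ?thesis unfolding M_def by blast
  qed
  have "(0 * p + 0 * c + 0, 0 + 0 * a + 0 * p) \<in> M"
    "(1 * p + 0 * c + 0, 0 + 0 * a + 0 * p) \<in> M" "(0 * p + 1 * c + 0, 1 + 0 * a + 0 * p) \<in> M"
    "(0 * p + 0 * c + 1, 0 + 1 * a + 0 * p) \<in> M" "(0 * p + 0 * c + 0, 0 + 0 * a + 1 * p) \<in> M"
    unfolding M_def by blast+
  then have M0: "0 \<in> M" and M_gens: "inv_gens p b \<subseteq> M" unfolding gens by (simp_all add: zero_prod_def)
  have "(1, a) \<in> inv_gens p b" using gens by blast
  then have "is_invariant p b (1, a)" unfolding inv_gens_iff by blast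
  moreover have "1 + b + b * (a - 1) = 1 + b * a" using assms(7) by (cases a) simp_all
  ultimately have "is_invariant p b (1 + b, a - 1)" by (simp add: is_invariant_iff_dvd)
  with M0 M_gens M_add have "(1 + b, a - 1) \<in> M" by (rule is_invariant_in_submonoid)
  then obtain \<alpha> \<beta> \<gamma> \<delta> where coeffs: "1 + b = \<alpha> * p + \<beta> * c + \<gamma>" "a - 1 = \<beta> + \<gamma> * a + \<delta> * p"
    unfolding M_def by blast
  have "binv p b < p" using binv_spec[OF assms(1-3)] by blast
  then have "\<gamma> = 0" "\<delta> = 0" using coeffs(2) assms(7) unfolding a by (cases \<gamma>; cases \<delta>; auto)+
  then have "(a - 1) * c \<le> 1 + b" using coeffs by simp
  then show ?thesis using assms(3,7) unfolding c by (cases a) (simp_all add: algebra_simps)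
qed

lemma zs_of_four_generators:
  assumes "inv_gens p b = {(p, 0), (c, 1), (1, a), (0, p)}" "1 < c" "c < p"
  shows "zs p b = [(p, 0), (c, 1), (1, a), (0, p)]"
proof -
  let ?xs = "[(0, p), (1, a), (c, 1), (p, 0)]"
  have "sorted ?xs" "distinct ?xs" using assms(2,3) by (auto simp: less_eq_prod_def)
  moreover have "inv_gens p b = set ?xs" using assms(1) by auto
  ultimately show ?thesis unfolding zs_def by (simp add: sorted_list_of_set.idem_if_sorted_distinct)
qed

section \<open>Pushing finitely supported functions along a map of keys\<close>

definition push_keys :: "('a \<Rightarrow> 'b) \<Rightarrow> ('a \<Rightarrow>\<^sub>0 'r::comm_monoid_add) \<Rightarrow> 'b \<Rightarrow>\<^sub>0 'r" where
  "push_keys h f = (\<Sum>m\<in>Poly_Mapping.keys f. Poly_Mapping.single (h m) (Poly_Mapping.lookup f m))"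

lemma push_keys_zero [simp]: "push_keys h 0 = 0"
  by (simp add: push_keys_def)

lemma push_keys_single [simp]: "push_keys h (Poly_Mapping.single m c) = Poly_Mapping.single (h m) c"
  by (cases "c = 0") (simp_all add: push_keys_def)

lemma push_keys_add: "push_keys h (f + g) = push_keys h f + push_keys h g"
  unfolding push_keys_def by (rule setsum_keys_plus_distrib) (simp_all add: single_add)

lemma push_keys_sum: "push_keys h (\<Sum>i\<in>A. f i) = (\<Sum>i\<in>A. push_keys h (f i))"
  by (induction A rule: infinite_finite_induct) (simp_all add: push_keys_add)

lemma push_keys_uminus: "push_keys h (- f) = - push_keys h (f :: _ \<Rightarrow>\<^sub>0 'r::ab_group_add)"
  by (simp add: push_keys_def single_uminus sum_negf)

lemma push_keys_diff: "push_keys h (f - g) = push_keys h f - push_keys h (g :: _ \<Rightarrow>\<^sub>0 'r::ab_group_add)"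
  using push_keys_add[of h f "- g"] by (simp add: push_keys_uminus)

lemma push_keys_id: "push_keys (\<lambda>m. m) f = f"
proof (rule poly_mapping_eqI)
  fix k
  have "Poly_Mapping.lookup (push_keys (\<lambda>m. m) f) k
      = (\<Sum>m\<in>Poly_Mapping.keys f. Poly_Mapping.lookup f m when m = k)"
    by (simp add: push_keys_def lookup_sum lookup_single)
  then show "Poly_Mapping.lookup (push_keys (\<lambda>m. m) f) k = Poly_Mapping.lookup f k"
    by (simp add: when_def in_keys_iff)
qed

lemma push_keys_comp: "push_keys g (push_keys h f) = push_keys (\<lambda>m. g (h m)) f"
  by (simp add: push_keys_def[of h] push_keys_sum) (simp add: push_keys_def)

lemma keys_push_keys: "Poly_Mapping.keys (push_keys h f) \<subseteq> h ` Poly_Mapping.keys f"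
  unfolding push_keys_def by (rule order_trans[OF keys_sum]) auto

lemma push_keys_mult:
  fixes h :: "'a::monoid_add \<Rightarrow> 'b::monoid_add" and f g :: "'a \<Rightarrow>\<^sub>0 'r::semiring_0"
  assumes "\<And>m n. h (m + n) = h m + h n"
  shows "push_keys h (f * g) = push_keys h f * push_keys h g"
proof -
  let ?F = "Poly_Mapping.keys f" and ?G = "Poly_Mapping.keys g"
  have "f * g = (\<Sum>m\<in>?F. \<Sum>n\<in>?G. Poly_Mapping.single (m + n) (Poly_Mapping.lookup f m * Poly_Mapping.lookup g n))"
    by (subst (1 2) push_keys_id[symmetric]) (simp add: push_keys_def sum_product mult_single)
  then have "push_keys h (f * g)
      = (\<Sum>m\<in>?F. \<Sum>n\<in>?G. Poly_Mapping.single (h m + h n) (Poly_Mapping.lookup f m * Poly_Mapping.lookup g n))"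
    by (simp add: push_keys_sum assms)
  also have "\<dots> = push_keys h f * push_keys h g"
    by (simp add: push_keys_def sum_product mult_single)
  finally show ?thesis .
qed

lemma push_keys_inj_on_eq_0:
  assumes "inj_on h (Poly_Mapping.keys f)" "push_keys h f = 0"
  shows "f = 0"
proof (rule ccontr)
  assume "f \<noteq> 0"
  then obtain n where n: "n \<in> Poly_Mapping.keys f" by fastforce
  have "Poly_Mapping.lookup (push_keys h f) (h n)
      = (\<Sum>m\<in>Poly_Mapping.keys f. Poly_Mapping.lookup f m when m = n)"
    unfolding push_keys_def lookup_sum lookup_single
    by (rule sum.cong) (use assms(1) n in \<open>auto simp: when_def inj_on_def\<close>)
  also have "\<dots> = Poly_Mapping.lookup f n" by (simp add: when_def in_keys_iff)
  finally show False using assms(2) n by (simp add: in_keys_iff)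
qed

lemma diff_push_keys:
  fixes f :: "'a::monoid_add \<Rightarrow>\<^sub>0 'r::ring_1"
  shows "f - push_keys h f = (\<Sum>m\<in>Poly_Mapping.keys f.
     Poly_Mapping.single 0 (Poly_Mapping.lookup f m) * (Poly_Mapping.single m 1 - Poly_Mapping.single (h m) 1))"
  by (subst (1) push_keys_id[symmetric])
     (simp add: push_keys_def sum_subtractf right_diff_distrib mult_single)

section \<open>Lead keys\<close>

definition lead_key :: "('a::linorder \<Rightarrow>\<^sub>0 'r::zero) \<Rightarrow> 'a" where
  "lead_key f = Max (Poly_Mapping.keys f)"

lemma lead_key_in_keys: "f \<noteq> 0 \<Longrightarrow> lead_key f \<in> Poly_Mapping.keys f"
  unfolding lead_key_def by (rule Max_in) auto

lemma le_lead_key: "k \<in> Poly_Mapping.keys f \<Longrightarrow> k \<le> lead_key f"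
  unfolding lead_key_def by (rule Max_ge) auto

lemma lookup_mult_eq_0:
  assumes "\<And>u v. u \<in> Poly_Mapping.keys f \<Longrightarrow> v \<in> Poly_Mapping.keys g \<Longrightarrow> u + v \<noteq> k"
  shows "Poly_Mapping.lookup (f * g) k = 0"
proof -
  have "k \<notin> Poly_Mapping.keys (f * g)" using keys_mult[of f g] assms by blast
  then show ?thesis by (simp add: in_keys_iff)
qed

lemma lead_key_split:
  obtains f' where "f = Poly_Mapping.single (lead_key f) (Poly_Mapping.lookup f (lead_key f)) + f'"
    and "\<And>u. u \<in> Poly_Mapping.keys f' \<Longrightarrow> u < lead_key f"
proof
  let ?f' = "Poly_Mapping.update (lead_key f) 0 f"
  show "f = Poly_Mapping.single (lead_key f) (Poly_Mapping.lookup f (lead_key f)) + ?f'"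
    by (rule poly_mapping_eqI) (simp add: lookup_add lookup_single lookup_update when_def)
  show "u < lead_key f" if "u \<in> Poly_Mapping.keys ?f'" for u
    using that le_lead_key[of u f] by (simp add: keys_update order_le_neq_trans)
qed

lemma lookup_mult_lead_keys:
  fixes f g :: "'a::{ordered_cancel_comm_monoid_add, linorder} \<Rightarrow>\<^sub>0 'r::semiring_0"
  shows "Poly_Mapping.lookup (f * g) (lead_key f + lead_key g)
           = Poly_Mapping.lookup f (lead_key f) * Poly_Mapping.lookup g (lead_key g)"
proof -
  define F G where "F = lead_key f" and "G = lead_key g"
  define cF cG where "cF = Poly_Mapping.lookup f F" and "cG = Poly_Mapping.lookup g G"
  obtain f' where f: "f = Poly_Mapping.single F cF + f'"
    and f': "\<And>u. u \<in> Poly_Mapping.keys f' \<Longrightarrow> u < F"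
    using lead_key_split[of f] unfolding F_def cF_def by blast
  obtain g' where g: "g = Poly_Mapping.single G cG + g'"
    and g': "\<And>v. v \<in> Poly_Mapping.keys g' \<Longrightarrow> v < G"
    using lead_key_split[of g] unfolding G_def cG_def by blast
  have "f * g = Poly_Mapping.single F cF * (Poly_Mapping.single G cG + g') + f' * g"
    using f g by (simp add: distrib_right)
  then have prod: "f * g = Poly_Mapping.single (F + G) (cF * cG) + Poly_Mapping.single F cF * g' + f' * g"
    by (simp add: distrib_left mult_single)
  have "Poly_Mapping.lookup (Poly_Mapping.single F cF * g') (F + G) = 0"
  proof (rule lookup_mult_eq_0)
    fix u v assume "u \<in> Poly_Mapping.keys (Poly_Mapping.single F cF)" and "v \<in> Poly_Mapping.keys g'"
    then have "u = F" "v < G" using g' by (simp_all split: if_splits)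
    then show "u + v \<noteq> F + G" by simp
  qed
  moreover have "Poly_Mapping.lookup (f' * g) (F + G) = 0"
  proof (rule lookup_mult_eq_0)
    fix u v assume "u \<in> Poly_Mapping.keys f'" "v \<in> Poly_Mapping.keys g"
    then have "u + v < F + G" using f' le_lead_key[of v g] unfolding G_def by (simp add: add_less_le_mono)
    then show "u + v \<noteq> F + G" by simp
  qed
  ultimately show ?thesis unfolding prod F_def G_def cF_def cG_def by (simp add: lookup_add)
qed

lemma lead_key_mult:
  fixes f g :: "'a::{ordered_cancel_comm_monoid_add, linorder} \<Rightarrow>\<^sub>0 'r::semiring_no_zero_divisors"
  assumes "f \<noteq> 0" "g \<noteq> 0"
  shows "lead_key (f * g) = lead_key f + lead_key g"
proof (unfold lead_key_def[of "f * g"], rule Max_eqI)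
  show "lead_key f + lead_key g \<in> Poly_Mapping.keys (f * g)"
    using lead_key_in_keys[OF assms(1)] lead_key_in_keys[OF assms(2)]
    by (simp add: in_keys_iff lookup_mult_lead_keys)
  show "k \<le> lead_key f + lead_key g" if "k \<in> Poly_Mapping.keys (f * g)" for k
    using keys_mult[of f g] that le_lead_key[of _ f] le_lead_key[of _ g] by (auto intro: add_mono)
qed simp

section \<open>Syzygies of the maximal minors of a 3 by 2 matrix\<close>

lemma kernel_of_maximal_minors:
  fixes y0 y1 y2 y3 P Q u0 u1 u2 :: "'a::idom"
  defines "f0 \<equiv> y1 * P - y0 * y2" and "f1 \<equiv> y2 * Q - y1 * y3" and "f2 \<equiv> P * Q - y0 * y3"
  assumes "f0 \<noteq> 0" "f1 \<noteq> 0" and regular: "\<And>X Z. f0 * X = f1 * Z \<Longrightarrow> f1 dvd X"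
  shows "f0 * u0 + f1 * u1 + f2 * u2 = 0 \<longleftrightarrow>
    (\<exists>\<alpha> \<beta>. u0 = - y3 * \<alpha> - Q * \<beta> \<and> u1 = - P * \<alpha> - y0 * \<beta> \<and> u2 = y2 * \<alpha> + y1 * \<beta>)"
proof
  assume syz: "f0 * u0 + f1 * u1 + f2 * u2 = 0"
  have "f0 * - (y1 * u0 + Q * u2) = f1 * (y1 * u1 + y0 * u2)"
    using syz unfolding f0_def f1_def f2_def by algebra
  moreover from regular[OF this] have "f1 dvd y1 * u0 + Q * u2" by (simp only: dvd_minus_iff)
  then obtain \<alpha> where \<alpha>1: "y1 * u0 + Q * u2 = f1 * \<alpha>" by (rule dvdE)
  ultimately have "f1 * (y1 * u1 + y0 * u2) = f1 * - (f0 * \<alpha>)" by algebra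
  then have \<alpha>2: "y1 * u1 + y0 * u2 = - (f0 * \<alpha>)"
    using \<open>f1 \<noteq> 0\<close> by (rule mult_left_cancel[THEN iffD1, rotated])
  have "f0 * - (y3 * u2 + y2 * u0) = f1 * (P * u2 + y2 * u1)"
    using syz unfolding f0_def f1_def f2_def by algebra
  moreover from regular[OF this] obtain \<beta> where \<beta>1: "- (y3 * u2 + y2 * u0) = f1 * \<beta>"
    by (rule dvdE)
  ultimately have "f1 * (P * u2 + y2 * u1) = f1 * (f0 * \<beta>)" by algebra
  then have \<beta>2: "P * u2 + y2 * u1 = f0 * \<beta>"
    using \<open>f1 \<noteq> 0\<close> by (rule mult_left_cancel[THEN iffD1, rotated])
  have "f1 * u0 = f1 * (- y3 * \<alpha> - Q * \<beta>)"
    using \<alpha>1 \<beta>1 unfolding f1_def by algebra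
  moreover have "f0 * u1 = f0 * (- P * \<alpha> - y0 * \<beta>)" "f0 * u2 = f0 * (y2 * \<alpha> + y1 * \<beta>)"
    using \<alpha>2 \<beta>2 unfolding f0_def by algebra+
  ultimately show "\<exists>\<alpha> \<beta>. u0 = - y3 * \<alpha> - Q * \<beta> \<and> u1 = - P * \<alpha> - y0 * \<beta> \<and> u2 = y2 * \<alpha> + y1 * \<beta>"
    using \<open>f0 \<noteq> 0\<close> \<open>f1 \<noteq> 0\<close> by auto
next
  assume "\<exists>\<alpha> \<beta>. u0 = - y3 * \<alpha> - Q * \<beta> \<and> u1 = - P * \<alpha> - y0 * \<beta> \<and> u2 = y2 * \<alpha> + y1 * \<beta>"
  then obtain \<alpha> \<beta> where "u0 = - y3 * \<alpha> - Q * \<beta>" "u1 = - P * \<alpha> - y0 * \<beta>" "u2 = y2 * \<alpha> + y1 * \<beta>"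
    by blast
  then show "f0 * u0 + f1 * u1 + f2 * u2 = 0" unfolding f0_def f1_def f2_def by algebra
qed

lemma maximal_minors_injective:
  fixes y0 y1 y2 P \<alpha> \<beta> :: "'a::idom"
  assumes "y1 * P - y0 * y2 \<noteq> 0" "- P * \<alpha> - y0 * \<beta> = 0" "y2 * \<alpha> + y1 * \<beta> = 0"
  shows "\<alpha> = 0 \<and> \<beta> = 0"
proof -
  have "(y1 * P - y0 * y2) * \<alpha> = 0" "(y1 * P - y0 * y2) * \<beta> = 0"
    using assms(2,3) by algebra+
  then show ?thesis using assms(1) by simp
qed

section \<open>Monomials of \<open>R\<close> and \<open>S\<close>\<close>

lemma four_cases: "(v :: 4) = 0 \<or> v = 1 \<or> v = 2 \<or> v = 3"
proof (cases v rule: bit0.cases)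
  case (1 z)
  then have "z = 0 \<or> z = 1 \<or> z = 2 \<or> z = 3" by auto
  then show ?thesis using 1 by auto
qed

lemma less_4_0: "\<not> (v :: 4) < 0"
  using Rep_bit0[of v] by (simp add: less_bit0_def bit0.Rep_0)

lemma less_4_1: "(v :: 4) < 1 \<Longrightarrow> v = 0"
  using four_cases[of v] by (auto simp: less_bit0_def bit0.Rep_numeral bit0.Rep_0 bit0.Rep_1)

lemma poly_mapping_4_eqI:
  fixes m n :: "4 \<Rightarrow>\<^sub>0 'a::zero"
  assumes "\<And>v. v \<in> {0, 1, 2, 3} \<Longrightarrow> Poly_Mapping.lookup m v = Poly_Mapping.lookup n v"
  shows "m = n"
  using assms four_cases by (intro poly_mapping_eqI) blast

definition ymon :: "(4 \<Rightarrow>\<^sub>0 nat) \<Rightarrow> Rpoly" where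
  "ymon m = Poly_Mapping.single m 1"

lemma y_eq_ymon: "y v = ymon (Poly_Mapping.single v 1)"
  by (simp add: y_def ymon_def)

lemma ymon_mult: "ymon m * ymon n = ymon (m + n)"
  by (simp add: ymon_def mult_single)

lemma y_power: "y v ^ k = ymon (Poly_Mapping.single v k)"
proof (induction k)
  case 0
  then show ?case by (simp add: ymon_def)
next
  case (Suc k)
  then show ?case using y_eq_ymon[of v] by (simp add: ymon_mult flip: single_add)
qed

lemma keys_binomial: "Poly_Mapping.keys (ymon u - ymon w) \<subseteq> {u, w}"
  using keys_diff[of "ymon u" "ymon w"] by (auto simp: ymon_def split: if_splits)

lemma binomial_nonzero: "u \<noteq> w \<Longrightarrow> ymon u - ymon w \<noteq> 0"
  by (metis lookup_minus lookup_single_eq lookup_single_not_eq lookup_zero ymon_def zero_neq_one diff_zero)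

lemma lead_key_binomial: "u < w \<Longrightarrow> lead_key (ymon u - ymon w) = w"
proof -
  assume "u < w"
  then have "Poly_Mapping.keys (ymon u - ymon w) = {u, w}"
    by (auto simp: ymon_def in_keys_iff lookup_minus lookup_single when_def split: if_splits)
  then show ?thesis using \<open>u < w\<close> by (simp add: lead_key_def)
qed

definition x_key :: "nat \<times> nat \<Rightarrow> nat \<Rightarrow>\<^sub>0 nat" where
  "x_key e = Poly_Mapping.single 0 (fst e) + Poly_Mapping.single 1 (snd e)"

lemma x_key_add: "x_key (e + e') = x_key e + x_key e'"
  by (simp add: x_key_def single_add algebra_simps)

lemma inj_x_key: "inj x_key"
proof (rule injI)
  fix e e' assume "x_key e = x_key e'"
  then have "Poly_Mapping.lookup (x_key e) 0 = Poly_Mapping.lookup (x_key e') 0"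
    "Poly_Mapping.lookup (x_key e) 1 = Poly_Mapping.lookup (x_key e') 1" by simp_all
  then show "e = e'" by (simp add: x_key_def lookup_add lookup_single prod_eq_iff)
qed

lemma xmon_mult: "xmon e * xmon e' = xmon (e + e')"
  by (simp add: xmon_def mult_single single_add algebra_simps)

lemma xmon_power: "xmon e ^ k = xmon (k * fst e, k * snd e)"
proof (induction k)
  case 0
  then show ?case by (simp add: xmon_def)
next
  case (Suc k)
  then show ?case by (cases e) (simp add: xmon_mult)
qed

lemma prod_xmon: "(\<Prod>v\<in>A. xmon (g v)) = xmon (\<Sum>v\<in>A. g v)"
  by (induction A rule: infinite_finite_induct) (simp_all add: xmon_mult, simp_all add: xmon_def)

text \<open>The three disjuncts are the shapes \<open>y\<^sub>0\<^sup>i y\<^sub>1\<^sup>j\<close>, \<open>y\<^sub>1\<^sup>j y\<^sub>2\<^sup>k\<close>, \<open>y\<^sub>2\<^sup>k y\<^sub>3\<^sup>l\<close> of the standard monomials.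
  The two equations force \<open>m\<^sub>1 - n\<^sub>1\<close> and \<open>m\<^sub>2 - n\<^sub>2\<close> to be determined by \<open>m\<^sub>0 - n\<^sub>0\<close> and \<open>m\<^sub>3 - n\<^sub>3\<close>
  (as \<open>a * c - 1 = p\<close>), and sign considerations in each pair of shapes finish the proof.\<close>

lemma standard_exponents_unique:
  fixes p a c m0 m1 m2 m3 n0 n1 n2 n3 :: int
  assumes "a * c = p + 1" "2 \<le> a" "2 \<le> c" "0 < p"
    and "0 \<le> m0" "0 \<le> m1" "0 \<le> m2" "0 \<le> m3" "0 \<le> n0" "0 \<le> n1" "0 \<le> n2" "0 \<le> n3"
    and E1: "p * m0 + c * m1 + m2 = p * n0 + c * n1 + n2"
    and E2: "m1 + a * m2 + p * m3 = n1 + a * n2 + p * n3"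
    and m: "(m2 = 0 \<and> m3 = 0) \<or> (m0 = 0 \<and> m3 = 0) \<or> (m0 = 0 \<and> m1 = 0)"
    and n: "(n2 = 0 \<and> n3 = 0) \<or> (n0 = 0 \<and> n3 = 0) \<or> (n0 = 0 \<and> n1 = 0)"
  shows "m0 = n0 \<and> m1 = n1 \<and> m2 = n2 \<and> m3 = n3"
proof -
  have "p * ((m3 - n3) - a * (m0 - n0) - (m1 - n1))
      = (m1 + a * m2 + p * m3 - (n1 + a * n2 + p * n3)) - a * (p * m0 + c * m1 + m2 - (p * n0 + c * n1 + n2))
        + (a * c - (p + 1)) * (m1 - n1)"
    by (simp add: algebra_simps)
  also have "\<dots> = 0" using E1 E2 assms(1) by simp
  finally have d1: "m1 - n1 = (m3 - n3) - a * (m0 - n0)" using assms(4) by simp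
  have "m2 - n2 = - p * (m0 - n0) - c * (m1 - n1)" using E1 by (simp add: algebra_simps)
  also have "\<dots> = (a * c - p) * (m0 - n0) - c * (m3 - n3)" unfolding d1 by (simp add: algebra_simps)
  finally have "m2 - n2 = (m0 - n0) - c * (m3 - n3)" using assms(1) by simp
  with d1 have d: "m1 - n1 = m3 - n3 - a * m0 + a * n0" "m2 - n2 = m0 - n0 - c * m3 + c * n3"
    by (simp_all add: algebra_simps)
  have "m0 \<le> a * m0" "n0 \<le> a * n0" "m3 \<le> c * m3" "n3 \<le> c * n3"
    using assms(2-12) by (simp_all add: mult_right_mono[of 1 a, simplified] mult_right_mono[of 1 c, simplified])
  moreover have "m0 = 0 \<longleftrightarrow> a * m0 = 0" "n0 = 0 \<longleftrightarrow> a * n0 = 0"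
    "m3 = 0 \<longleftrightarrow> c * m3 = 0" "n3 = 0 \<longleftrightarrow> c * n3 = 0"
    using assms(2,3) by auto
  ultimately show ?thesis using m n d assms(5-12) by (elim disjE conjE; smt (verit))
qed

section \<open>The resolution in the four-generator case\<close>

locale four_generators =
  fixes p b a c :: nat
  assumes zs_eq: "zs p b = [(p, 0), (c, 1), (1, a), (0, p)]"
    and binv_add: "binv p b + a = p" and b_add: "b + c = p"
    and ac: "a * c = p + 1" and two_le_a: "2 \<le> a" and two_le_c: "2 \<le> c"
begin

lemma p_pos: "0 < p"
  using ac two_le_a two_le_c mult_le_mono[OF two_le_a two_le_c] by linarith

lemma p_minus_binv: "p - binv p b = a"
  using binv_add by simp

lemma p_minus_b: "p - b = c"
  using b_add by simp

definition phi_exponent :: "(4 \<Rightarrow>\<^sub>0 nat) \<Rightarrow> nat \<times> nat" where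
  "phi_exponent m =
    (p * Poly_Mapping.lookup m 0 + c * Poly_Mapping.lookup m 1 + Poly_Mapping.lookup m 2,
     Poly_Mapping.lookup m 1 + a * Poly_Mapping.lookup m 2 + p * Poly_Mapping.lookup m 3)"

lemma phi_exponent_add: "phi_exponent (m + n) = phi_exponent m + phi_exponent n"
  by (simp add: phi_exponent_def lookup_add algebra_simps)

lemma prod_zs_power:
  "(\<Prod>v\<in>Poly_Mapping.keys m. xmon (zs p b ! var_index v) ^ Poly_Mapping.lookup m v) = xmon (phi_exponent m)"
proof -
  let ?e = "\<lambda>v. (Poly_Mapping.lookup m v * fst (zs p b ! var_index v),
                   Poly_Mapping.lookup m v * snd (zs p b ! var_index v))"
  have "(\<Prod>v\<in>Poly_Mapping.keys m. xmon (zs p b ! var_index v) ^ Poly_Mapping.lookup m v)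
      = xmon (\<Sum>v\<in>Poly_Mapping.keys m. ?e v)"
    by (simp add: xmon_power prod_xmon)
  also have "(\<Sum>v\<in>Poly_Mapping.keys m. ?e v) = (\<Sum>v\<in>{0, 1, 2, 3}. ?e v)"
    by (rule sum.mono_neutral_left) (use four_cases in \<open>auto simp: in_keys_iff zero_prod_def\<close>)
  also have "\<dots> = ?e 0 + (?e 1 + (?e 2 + ?e 3))" by simp
  also have "\<dots> = phi_exponent m"
    by (simp add: zs_eq var_index_def phi_exponent_def algebra_simps)
  finally show ?thesis .
qed

lemma phi_eq_push_keys: "phi p b f = push_keys (\<lambda>m. x_key (phi_exponent m)) f"
  unfolding phi_def prod_zs_power push_keys_def
  by (rule sum.cong) (simp_all add: xmon_def x_key_def mult_single)

lemma phi_ymon: "phi p b (ymon m) = xmon (phi_exponent m)"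
  by (simp add: phi_eq_push_keys ymon_def xmon_def x_key_def)

lemma phi_mult: "phi p b (f * g) = phi p b f * phi p b g"
  unfolding phi_eq_push_keys by (rule push_keys_mult) (simp add: phi_exponent_add x_key_add)

lemma phi_add: "phi p b (f + g) = phi p b f + phi p b g"
  unfolding phi_eq_push_keys by (rule push_keys_add)

lemma phi_diff: "phi p b (f - g) = phi p b f - phi p b g"
  unfolding phi_eq_push_keys by (rule push_keys_diff)

text \<open>A pair \<open>(u, w)\<close> is the rewrite rule \<open>y\<^sup>u \<mapsto> y\<^sup>w\<close> given by the entry \<open>y\<^sup>w - y\<^sup>u\<close> of \<open>\<partial>\<^sub>1\<close>;
  \<open>y\<^sup>u\<close> is its lexicographic lead monomial.\<close>

definition relations :: "((4 \<Rightarrow>\<^sub>0 nat) \<times> (4 \<Rightarrow>\<^sub>0 nat)) set" where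
  "relations =
    {(Poly_Mapping.single 0 1 + Poly_Mapping.single 2 1, Poly_Mapping.single 1 a),
     (Poly_Mapping.single 1 1 + Poly_Mapping.single 3 1, Poly_Mapping.single 2 c),
     (Poly_Mapping.single 0 1 + Poly_Mapping.single 3 1, Poly_Mapping.single 1 (a - 1) + Poly_Mapping.single 2 (c - 1))}"

lemma D1_eq:
  "D1 p b 0 = ymon (Poly_Mapping.single 1 a) - ymon (Poly_Mapping.single 0 1 + Poly_Mapping.single 2 1)"
  "D1 p b 1 = ymon (Poly_Mapping.single 2 c) - ymon (Poly_Mapping.single 1 1 + Poly_Mapping.single 3 1)"
  "D1 p b 2 = ymon (Poly_Mapping.single 1 (a - 1) + Poly_Mapping.single 2 (c - 1))
                - ymon (Poly_Mapping.single 0 1 + Poly_Mapping.single 3 1)"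
  unfolding D1_def p_minus_binv p_minus_b y_power by (simp_all only: y_eq_ymon ymon_mult) simp_all

lemma phi_exponent_relations: "(u, w) \<in> relations \<Longrightarrow> phi_exponent u = phi_exponent w"
proof -
  have "c * (a - 1) + c = a * c" "a * (c - 1) + a = a * c"
    using two_le_a two_le_c by (simp_all add: algebra_simps diff_mult_distrib diff_mult_distrib2)
  then have "c * (a - 1) + (c - 1) = p" "a - 1 + a * (c - 1) = p"
    using ac two_le_a two_le_c by linarith+
  then show "(u, w) \<in> relations \<Longrightarrow> phi_exponent u = phi_exponent w"
    using ac by (auto simp: relations_def phi_exponent_def lookup_add lookup_single mult.commute)
qed

lemma phi_D1: "phi p b (D1 p b i) = 0"
proof -
  have binomial: "phi p b (ymon w - ymon u) = 0" if "(u, w) \<in> relations" for u w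
    using phi_exponent_relations[OF that] by (simp add: phi_diff phi_ymon)
  have "phi p b (D1 p b 0) = 0" "phi p b (D1 p b 1) = 0" "phi p b (D1 p b 2) = 0"
    unfolding D1_eq by (simp_all add: binomial relations_def)
  moreover have "i = 0 \<or> i = 1 \<or> D1 p b i = D1 p b 2" by (simp add: D1_def)
  ultimately show ?thesis by auto
qed

lemma phi_partial1: "phi p b (partial1 p b t) = 0"
  by (simp add: partial1_def phi_add phi_mult phi_D1)


definition relation_ideal :: "Rpoly set" where
  "relation_ideal = range (partial1 p b)"

lemma relation_ideal_add: "f \<in> relation_ideal \<Longrightarrow> g \<in> relation_ideal \<Longrightarrow> f + g \<in> relation_ideal"
proof -
  assume "f \<in> relation_ideal" "g \<in> relation_ideal"
  then obtain s t where "f = partial1 p b s" "g = partial1 p b t" unfolding relation_ideal_def by blast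
  then have "f + g = partial1 p b (fst s + fst t, fst (snd s) + fst (snd t), snd (snd s) + snd (snd t))"
    by (simp add: partial1_def algebra_simps)
  then show ?thesis unfolding relation_ideal_def by blast
qed

lemma relation_ideal_mult: "f \<in> relation_ideal \<Longrightarrow> r * f \<in> relation_ideal"
proof -
  assume "f \<in> relation_ideal"
  then obtain s where "f = partial1 p b s" unfolding relation_ideal_def by blast
  then have "r * f = partial1 p b (r * fst s, r * fst (snd s), r * snd (snd s))"
    by (simp add: partial1_def algebra_simps)
  then show ?thesis unfolding relation_ideal_def by blast
qed

lemma zero_in_relation_ideal: "0 \<in> relation_ideal"
  using rangeI[of "partial1 p b" "(0, 0, 0)"] by (simp add: relation_ideal_def partial1_def)

lemma relation_ideal_sum: "(\<And>i. i \<in> A \<Longrightarrow> f i \<in> relation_ideal) \<Longrightarrow> (\<Sum>i\<in>A. f i) \<in> relation_ideal"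
  by (induction A rule: infinite_finite_induct) (simp_all add: zero_in_relation_ideal relation_ideal_add)

lemma relations_in_relation_ideal:
  assumes "(u, w) \<in> relations"
  shows "ymon u - ymon w \<in> relation_ideal"
proof -
  have "partial1 p b (1, 0, 0) = D1 p b 0" "partial1 p b (0, 1, 0) = D1 p b 1"
    "partial1 p b (0, 0, 1) = D1 p b 2"
    by (simp_all add: partial1_def)
  then have "D1 p b 0 \<in> relation_ideal" "D1 p b 1 \<in> relation_ideal" "D1 p b 2 \<in> relation_ideal"
    unfolding relation_ideal_def by (metis rangeI)+
  then have "ymon w - ymon u \<in> relation_ideal" using assms unfolding D1_eq relations_def by auto
  moreover have "ymon u - ymon w = (- 1) * (ymon w - ymon u)" by simp
  ultimately show ?thesis using relation_ideal_mult by metis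
qed

definition standard :: "(4 \<Rightarrow>\<^sub>0 nat) \<Rightarrow> bool" where
  "standard m \<longleftrightarrow>
    (Poly_Mapping.lookup m 0 = 0 \<or> Poly_Mapping.lookup m 2 = 0) \<and>
    (Poly_Mapping.lookup m 1 = 0 \<or> Poly_Mapping.lookup m 3 = 0) \<and>
    (Poly_Mapping.lookup m 0 = 0 \<or> Poly_Mapping.lookup m 3 = 0)"

lemma inj_on_phi_exponent_standard: "inj_on phi_exponent {m. standard m}"
proof (rule inj_onI)
  fix m n assume "m \<in> {m. standard m}" "n \<in> {m. standard m}" and eq: "phi_exponent m = phi_exponent n"
  let ?m = "\<lambda>v. int (Poly_Mapping.lookup m v)" and ?n = "\<lambda>v. int (Poly_Mapping.lookup n v)"
  have shapes: "(?m 2 = 0 \<and> ?m 3 = 0) \<or> (?m 0 = 0 \<and> ?m 3 = 0) \<or> (?m 0 = 0 \<and> ?m 1 = 0)"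
    "(?n 2 = 0 \<and> ?n 3 = 0) \<or> (?n 0 = 0 \<and> ?n 3 = 0) \<or> (?n 0 = 0 \<and> ?n 1 = 0)"
    using \<open>m \<in> _\<close> \<open>n \<in> _\<close> unfolding standard_def by auto
  have "int p * ?m 0 + int c * ?m 1 + ?m 2 = int p * ?n 0 + int c * ?n 1 + ?n 2"
    "?m 1 + int a * ?m 2 + int p * ?m 3 = ?n 1 + int a * ?n 2 + int p * ?n 3"
    unfolding of_nat_mult[symmetric] of_nat_add[symmetric] of_nat_eq_iff
    using eq by (simp_all add: phi_exponent_def)
  moreover have "int a * int c = int p + 1" unfolding of_nat_mult[symmetric] ac by simp
  ultimately have "?m v = ?n v" if "v \<in> {0, 1, 2, 3}" for v
    using standard_exponents_unique[of "int a" "int c" "int p", OF _ _ _ _ _ _ _ _ _ _ _ _ _ _ shapes]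
      two_le_a two_le_c p_pos that
    by auto
  then show "m = n" by (intro poly_mapping_4_eqI) simp
qed

lemma nonstandard_divisible: "\<not> standard m \<Longrightarrow> \<exists>(u, w) \<in> relations. \<exists>n. m = n + u"
proof -
  have split: "\<exists>n. m = n + (Poly_Mapping.single i 1 + Poly_Mapping.single j 1)"
    if "i \<noteq> j" "0 < Poly_Mapping.lookup m i" "0 < Poly_Mapping.lookup m j" for i j
    using that
    by (intro exI[of _ "m - (Poly_Mapping.single i 1 + Poly_Mapping.single j 1)"] poly_mapping_eqI)
       (auto simp: lookup_add lookup_minus lookup_single when_def)
  assume "\<not> standard m"
  then consider "0 < Poly_Mapping.lookup m 0" "0 < Poly_Mapping.lookup m 2"
    | "0 < Poly_Mapping.lookup m 1" "0 < Poly_Mapping.lookup m 3"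
    | "0 < Poly_Mapping.lookup m 0" "0 < Poly_Mapping.lookup m 3"
    unfolding standard_def by blast
  then show ?thesis
  proof cases
    case 1
    with split[of 0 2] show ?thesis unfolding relations_def by auto
  next
    case 2
    with split[of 1 3] show ?thesis unfolding relations_def by auto
  next
    case 3
    with split[of 0 3] show ?thesis unfolding relations_def by auto
  qed
qed

lemma relations_lower_y0_y3_degree:
  "(u, w) \<in> relations \<Longrightarrow>
     Poly_Mapping.lookup w 0 + Poly_Mapping.lookup w 3 < Poly_Mapping.lookup u 0 + Poly_Mapping.lookup u 3"
  by (auto simp: relations_def lookup_add lookup_single)

lemma exists_standard_representative:
  "\<exists>s. standard s \<and> phi_exponent s = phi_exponent m \<and> ymon m - ymon s \<in> relation_ideal"
proof (induction "Poly_Mapping.lookup m 0 + Poly_Mapping.lookup m 3" arbitrary: m rule: less_induct)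
  case less
  show ?case
  proof (cases "standard m")
    case True
    then show ?thesis using zero_in_relation_ideal by auto
  next
    case False
    then obtain u w n where uw: "(u, w) \<in> relations" and m: "m = n + u"
      using nonstandard_divisible by blast
    have "Poly_Mapping.lookup (n + w) 0 + Poly_Mapping.lookup (n + w) 3
        < Poly_Mapping.lookup m 0 + Poly_Mapping.lookup m 3"
      using relations_lower_y0_y3_degree[OF uw] unfolding m by (simp add: lookup_add)
    then obtain s where s: "standard s" "phi_exponent s = phi_exponent (n + w)"
      "ymon (n + w) - ymon s \<in> relation_ideal"
      using less.hyps by blast
    have "ymon m - ymon (n + w) = ymon n * (ymon u - ymon w)"
      unfolding m by (simp add: ymon_mult[symmetric] algebra_simps)
    then have "ymon m - ymon (n + w) \<in> relation_ideal"
      using relation_ideal_mult[OF relations_in_relation_ideal[OF uw]] by simp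
    then have "(ymon m - ymon (n + w)) + (ymon (n + w) - ymon s) \<in> relation_ideal"
      using s(3) by (rule relation_ideal_add)
    then have "ymon m - ymon s \<in> relation_ideal" by simp
    moreover have "phi_exponent s = phi_exponent m"
      using s(2) phi_exponent_relations[OF uw] unfolding m by (simp add: phi_exponent_add)
    ultimately show ?thesis using s(1) by blast
  qed
qed

lemma kernel_phi_subset: "phi p b f = 0 \<Longrightarrow> f \<in> relation_ideal"
proof -
  assume f: "phi p b f = 0"
  define nf where
    "nf m = (SOME s. standard s \<and> phi_exponent s = phi_exponent m \<and> ymon m - ymon s \<in> relation_ideal)" for m
  have "standard (nf m) \<and> phi_exponent (nf m) = phi_exponent m \<and> ymon m - ymon (nf m) \<in> relation_ideal" for m
    unfolding nf_def by (rule someI_ex) (rule exists_standard_representative)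
  then have nf: "\<And>m. standard (nf m)" "\<And>m. phi_exponent (nf m) = phi_exponent m"
    "\<And>m. ymon m - ymon (nf m) \<in> relation_ideal"
    by blast+
  let ?g = "push_keys nf f"
  have "f - ?g \<in> relation_ideal"
    unfolding diff_push_keys
    by (rule relation_ideal_sum, rule relation_ideal_mult) (use nf(3) in \<open>simp add: ymon_def\<close>)
  moreover have "?g = 0"
  proof (rule push_keys_inj_on_eq_0)
    have "Poly_Mapping.keys ?g \<subseteq> {m. standard m}" using keys_push_keys[of nf f] nf(1) by blast
    then have "inj_on phi_exponent (Poly_Mapping.keys ?g)"
      by (rule inj_on_subset[OF inj_on_phi_exponent_standard])
    then have "inj_on (x_key \<circ> phi_exponent) (Poly_Mapping.keys ?g)"
      by (rule comp_inj_on) (rule inj_on_subset[OF inj_x_key subset_UNIV])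
    then show "inj_on (\<lambda>m. x_key (phi_exponent m)) (Poly_Mapping.keys ?g)" by (simp add: comp_def)
    have "push_keys (\<lambda>m. x_key (phi_exponent m)) ?g = push_keys (\<lambda>m. x_key (phi_exponent (nf m))) f"
      by (rule push_keys_comp)
    also have "\<dots> = phi p b f" unfolding nf(2) by (rule phi_eq_push_keys[symmetric])
    finally show "push_keys (\<lambda>m. x_key (phi_exponent m)) ?g = 0" using f by simp
  qed
  ultimately show ?thesis by simp
qed

lemma range_partial1: "range (partial1 p b) = {f. phi p b f = 0}"
proof (intro equalityI subsetI)
  fix f assume "f \<in> range (partial1 p b)"
  then show "f \<in> {f. phi p b f = 0}" using phi_partial1 by auto
next
  fix f assume "f \<in> {f. phi p b f = 0}"
  then show "f \<in> range (partial1 p b)" using kernel_phi_subset unfolding relation_ideal_def by simp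
qed


definition reduce_y1y3 :: "(4 \<Rightarrow>\<^sub>0 nat) \<Rightarrow> 4 \<Rightarrow>\<^sub>0 nat" where
  "reduce_y1y3 m = (let k = min (Poly_Mapping.lookup m 1) (Poly_Mapping.lookup m 3) in
     m - (Poly_Mapping.single 1 k + Poly_Mapping.single 3 k) + Poly_Mapping.single 2 (c * k))"

lemma reduce_y1y3_exhausts:
  "Poly_Mapping.lookup (reduce_y1y3 m) 1 = 0 \<or> Poly_Mapping.lookup (reduce_y1y3 m) 3 = 0"
  by (auto simp: reduce_y1y3_def Let_def lookup_add lookup_minus lookup_single min_def)

lemma D1_as_minors:
  "D1 p b 0 = y 1 * y 1 ^ (a - 1) - y 0 * y 2"
  "D1 p b 1 = y 2 * y 2 ^ (c - 1) - y 1 * y 3"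
  "D1 p b 2 = y 1 ^ (a - 1) * y 2 ^ (c - 1) - y 0 * y 3"
proof -
  have "y v * y v ^ (k - 1) = y v ^ k" if "2 \<le> k" for v k
    using that by (cases k) simp_all
  then show "D1 p b 0 = y 1 * y 1 ^ (a - 1) - y 0 * y 2"
    "D1 p b 1 = y 2 * y 2 ^ (c - 1) - y 1 * y 3"
    "D1 p b 2 = y 1 ^ (a - 1) * y 2 ^ (c - 1) - y 0 * y 3"
    using two_le_a two_le_c by (simp_all add: D1_def p_minus_binv p_minus_b)
qed

lemma D1_1_dvd_reduce_y1y3: "D1 p b 1 dvd ymon m - ymon (reduce_y1y3 m)"
proof -
  define k where "k = min (Poly_Mapping.lookup m 1) (Poly_Mapping.lookup m 3)"
  define n where "n = m - (Poly_Mapping.single 1 k + Poly_Mapping.single 3 k)"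
  have "m = n + (Poly_Mapping.single 1 k + Poly_Mapping.single 3 k)"
    unfolding n_def k_def
    by (rule poly_mapping_eqI) (auto simp: lookup_add lookup_minus lookup_single when_def)
  moreover have "(y 1 * y 3) ^ k = ymon (Poly_Mapping.single 1 k + Poly_Mapping.single 3 k)"
    by (simp only: power_mult_distrib y_power ymon_mult)
  ultimately have "ymon m = ymon n * (y 1 * y 3) ^ k" by (simp add: ymon_mult)
  moreover have "(y 2 ^ c) ^ k = ymon (Poly_Mapping.single 2 (c * k))"
    unfolding power_mult[symmetric] by (rule y_power)
  then have "ymon (reduce_y1y3 m) = ymon n * (y 2 ^ c) ^ k"
    by (simp add: reduce_y1y3_def Let_def n_def k_def ymon_mult)
  ultimately have diff: "ymon m - ymon (reduce_y1y3 m) = ymon n * ((y 1 * y 3) ^ k - (y 2 ^ c) ^ k)"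
    by (simp add: right_diff_distrib)
  have "y 2 * y 2 ^ (c - 1) = y 2 ^ c" using two_le_c by (cases c) simp_all
  then have "D1 p b 1 = - (y 1 * y 3 - y 2 ^ c)" unfolding D1_as_minors by simp
  moreover have "y 1 * y 3 - y 2 ^ c dvd (y 1 * y 3) ^ k - (y 2 ^ c) ^ k"
    by (simp add: power_diff_sumr2)
  ultimately have "D1 p b 1 dvd (y 1 * y 3) ^ k - (y 2 ^ c) ^ k" by (simp only: minus_dvd_iff)
  then show ?thesis unfolding diff by (rule dvd_mult)
qed

lemma less_single_4:
  "Poly_Mapping.single 1 a < Poly_Mapping.single 0 1 + (Poly_Mapping.single 2 1 :: 4 \<Rightarrow>\<^sub>0 nat)"
  "Poly_Mapping.single 2 c < Poly_Mapping.single 1 1 + (Poly_Mapping.single 3 1 :: 4 \<Rightarrow>\<^sub>0 nat)"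
  unfolding less_poly_mapping.rep_eq less_fun_def
  by (rule exI[of _ 0], simp add: lookup_add lookup_single less_4_0)
     (rule exI[of _ 1], auto simp: lookup_add lookup_single dest: less_4_1)

lemma lead_key_D1:
  "lead_key (D1 p b 0) = Poly_Mapping.single 0 1 + Poly_Mapping.single 2 1"
  "lead_key (D1 p b 1) = Poly_Mapping.single 1 1 + Poly_Mapping.single 3 1"
  unfolding D1_eq by (rule lead_key_binomial, rule less_single_4)+

lemma D1_nonzero: "D1 p b 0 \<noteq> 0" "D1 p b 1 \<noteq> 0"
  unfolding D1_eq by (rule binomial_nonzero, rule less_imp_neq, rule less_single_4)+

lemma D1_1_dvd_diff_reduce_y1y3: "D1 p b 1 dvd X - push_keys reduce_y1y3 X"
  unfolding diff_push_keys
  by (intro dvd_sum dvd_mult) (use D1_1_dvd_reduce_y1y3 in \<open>simp add: ymon_def\<close>)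

text \<open>The lead monomial \<open>y\<^sub>0 y\<^sub>2\<close> of \<open>D1 p b 0\<close> contributes no \<open>y\<^sub>1\<close>, \<open>y\<^sub>3\<close>, so by comparing lead keys the
  lead monomial of \<open>X\<close> is divisible by the lead monomial \<open>y\<^sub>1 y\<^sub>3\<close> of \<open>D1 p b 1\<close>.\<close>

lemma D1_multiple_reduced_eq_0:
  assumes "D1 p b 0 * X = D1 p b 1 * Z"
    and reduced: "\<And>k. k \<in> Poly_Mapping.keys X \<Longrightarrow> Poly_Mapping.lookup k 1 = 0 \<or> Poly_Mapping.lookup k 3 = 0"
  shows "X = 0"
proof (rule ccontr)
  assume X: "X \<noteq> 0"
  then have Z: "Z \<noteq> 0" using assms(1) D1_nonzero by auto
  have "lead_key (D1 p b 0) + lead_key X = lead_key (D1 p b 1) + lead_key Z"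
    using lead_key_mult[OF D1_nonzero(1) X] lead_key_mult[OF D1_nonzero(2) Z] assms(1) by simp
  then have "Poly_Mapping.lookup (lead_key (D1 p b 0) + lead_key X) v
      = Poly_Mapping.lookup (lead_key (D1 p b 1) + lead_key Z) v" for v
    by simp
  from this[of 1] this[of 3]
  have "Poly_Mapping.lookup (lead_key X) 1 \<noteq> 0" "Poly_Mapping.lookup (lead_key X) 3 \<noteq> 0"
    unfolding lead_key_D1 by (simp_all add: lookup_add lookup_single)
  with reduced[OF lead_key_in_keys[OF X]] show False by simp
qed

lemma D1_regular:
  assumes "D1 p b 0 * X = D1 p b 1 * Z"
  shows "D1 p b 1 dvd X"
proof -
  let ?X' = "push_keys reduce_y1y3 X"
  obtain q where q: "X - ?X' = D1 p b 1 * q" using D1_1_dvd_diff_reduce_y1y3 by (rule dvdE)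
  have "?X' = X - (X - ?X')" by simp
  also have "\<dots> = X - D1 p b 1 * q" by (simp only: q)
  finally have "D1 p b 0 * ?X' = D1 p b 0 * X - D1 p b 1 * (D1 p b 0 * q)"
    by (simp add: right_diff_distrib mult.left_commute)
  also have "\<dots> = D1 p b 1 * (Z - D1 p b 0 * q)" by (simp add: assms right_diff_distrib)
  finally have "?X' = 0"
  proof (rule D1_multiple_reduced_eq_0)
    fix k assume "k \<in> Poly_Mapping.keys ?X'"
    then have "k \<in> reduce_y1y3 ` Poly_Mapping.keys X" by (rule subsetD[OF keys_push_keys])
    then obtain m where "k = reduce_y1y3 m" by blast
    then show "Poly_Mapping.lookup k 1 = 0 \<or> Poly_Mapping.lookup k 3 = 0" using reduce_y1y3_exhausts by simp
  qed
  then show ?thesis using q by simp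
qed

lemma partial1_as_minors:
  "partial1 p b t = (y 1 * y 1 ^ (a - 1) - y 0 * y 2) * fst t + (y 2 * y 2 ^ (c - 1) - y 1 * y 3) * fst (snd t)
     + (y 1 ^ (a - 1) * y 2 ^ (c - 1) - y 0 * y 3) * snd (snd t)"
  unfolding partial1_def D1_as_minors ..

lemma partial2_eq:
  "partial2 p b u = (- y 3 * fst u - y 2 ^ (c - 1) * snd u,
                     - (y 1 ^ (a - 1)) * fst u - y 0 * snd u,
                     y 2 * fst u + y 1 * snd u)"
  by (simp add: partial2_def D2_def p_minus_binv p_minus_b)

theorem kernel_partial1: "{t. partial1 p b t = 0} = range (partial2 p b)"
proof -
  note minors = kernel_of_maximal_minors[of "y 1" "y 1 ^ (a - 1)" "y 0" "y 2" "y 2 ^ (c - 1)" "y 3",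
      OF D1_nonzero[unfolded D1_as_minors] D1_regular[unfolded D1_as_minors]]
  have triple: "partial1 p b (u0, u1, u2) = 0 \<longleftrightarrow> (\<exists>\<alpha> \<beta>. (u0, u1, u2) = partial2 p b (\<alpha>, \<beta>))"
    for u0 u1 u2
    unfolding partial1_as_minors partial2_eq fst_conv snd_conv prod.inject by (rule minors)
  show ?thesis
  proof (intro equalityI subsetI)
    fix t assume "t \<in> {t. partial1 p b t = 0}"
    with triple[of "fst t" "fst (snd t)" "snd (snd t)"] obtain \<alpha> \<beta> where "t = partial2 p b (\<alpha>, \<beta>)"
      by auto
    then show "t \<in> range (partial2 p b)" by blast
  next
    fix t assume "t \<in> range (partial2 p b)"
    then obtain x where t: "t = partial2 p b x" by blast
    obtain \<alpha> \<beta> where "x = (\<alpha>, \<beta>)" by fastforce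
    with t have "(fst t, fst (snd t), snd (snd t)) = partial2 p b (\<alpha>, \<beta>)" by simp
    then have "partial1 p b (fst t, fst (snd t), snd (snd t)) = 0" using triple by blast
    then show "t \<in> {t. partial1 p b t = 0}" by simp
  qed
qed

theorem inj_partial2: "inj (partial2 p b)"
proof (rule injI)
  fix u v assume "partial2 p b u = partial2 p b v"
  then have "- (y 1 ^ (a - 1)) * (fst u - fst v) - y 0 * (snd u - snd v) = 0"
    "y 2 * (fst u - fst v) + y 1 * (snd u - snd v) = 0"
    unfolding partial2_eq by (simp_all add: algebra_simps)
  with maximal_minors_injective[OF D1_nonzero(1)[unfolded D1_as_minors]]
  have "fst u - fst v = 0 \<and> snd u - snd v = 0" by blast
  then show "u = v" by (simp add: prod_eq_iff)
qed

lemma wdeg_eq_phi_exponent: "wdeg p b m = fst (phi_exponent m) + snd (phi_exponent m)"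
proof -
  have "wdeg p b m = (\<Sum>v\<in>{0, 1, 2, 3}. Poly_Mapping.lookup m v * zdeg p b (var_index v))"
    unfolding wdeg_def by (rule sum.mono_neutral_left) (use four_cases in \<open>auto simp: in_keys_iff\<close>)
  also have "\<dots> = fst (phi_exponent m) + snd (phi_exponent m)"
    by (simp add: zdeg_def zs_eq var_index_def phi_exponent_def algebra_simps)
  finally show ?thesis .
qed

lemma homog_relation:
  assumes "(u, w) \<in> relations" "int (wdeg p b u) = d"
  shows "homog p b (ymon w - ymon u) d"
proof -
  have "wdeg p b w = wdeg p b u"
    using phi_exponent_relations[OF assms(1)] by (simp add: wdeg_eq_phi_exponent)
  then show ?thesis using keys_binomial[of w u] assms(2) unfolding homog_def by auto
qed

lemma homog_ymon:
  assumes "int (wdeg p b u) = d"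
  shows "homog p b (ymon u) d" "homog p b (- ymon u) d"
  using assms by (simp_all add: homog_def ymon_def)

lemma dg_eq:
  "dg1 p b = [int p + int a + 1, int p + int c + 1, 2 * int p]"
  "dg2 p b = [2 * int p + int a + 1, 2 * int p + int c + 1]"
proof -
  have "int (binv p b) = int p - int a" "int b = int p - int c" using binv_add b_add by linarith+
  then show "dg1 p b = [int p + int a + 1, int p + int c + 1, 2 * int p]"
    "dg2 p b = [2 * int p + int a + 1, 2 * int p + int c + 1]"
    by (simp_all add: dg1_def dg2_def)
qed

theorem homog_D1: "\<forall>i<3. homog p b (D1 p b i) (dg1 p b ! i)"
proof (intro allI impI)
  fix i :: nat assume "i < 3"
  then consider "i = 0" | "i = 1" | "i = 2" by linarith
  then show "homog p b (D1 p b i) (dg1 p b ! i)"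
  proof cases
    case 1
    have "int (wdeg p b (Poly_Mapping.single 0 1 + Poly_Mapping.single 2 1)) = dg1 p b ! 0"
      by (simp add: wdeg_eq_phi_exponent phi_exponent_def lookup_add lookup_single dg_eq)
    then show ?thesis unfolding 1 D1_eq by (rule homog_relation[rotated]) (simp add: relations_def)
  next
    case 2
    have "int (wdeg p b (Poly_Mapping.single 1 1 + Poly_Mapping.single 3 1)) = dg1 p b ! 1"
      by (simp add: wdeg_eq_phi_exponent phi_exponent_def lookup_add lookup_single dg_eq)
    then show ?thesis unfolding 2 D1_eq by (rule homog_relation[rotated]) (simp add: relations_def)
  next
    case 3
    have "int (wdeg p b (Poly_Mapping.single 0 1 + Poly_Mapping.single 3 1)) = dg1 p b ! 2"
      by (simp add: wdeg_eq_phi_exponent phi_exponent_def lookup_add lookup_single dg_eq)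
    then show ?thesis unfolding 3 D1_eq by (rule homog_relation[rotated]) (simp add: relations_def)
  qed
qed

lemma D2_eq:
  "D2 p b 0 0 = - ymon (Poly_Mapping.single 3 1)" "D2 p b 0 1 = - ymon (Poly_Mapping.single 2 (c - 1))"
  "D2 p b 1 0 = - ymon (Poly_Mapping.single 1 (a - 1))" "D2 p b 1 1 = - ymon (Poly_Mapping.single 0 1)"
  "D2 p b 2 0 = ymon (Poly_Mapping.single 2 1)" "D2 p b 2 1 = ymon (Poly_Mapping.single 1 1)"
  unfolding D2_def p_minus_binv p_minus_b by (simp_all only: y_power) (simp_all add: y_eq_ymon)

lemma wdeg_single:
  "wdeg p b (Poly_Mapping.single 0 k) = p * k" "wdeg p b (Poly_Mapping.single 1 k) = (c + 1) * k"
  "wdeg p b (Poly_Mapping.single 2 k) = (a + 1) * k" "wdeg p b (Poly_Mapping.single 3 k) = p * k"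
  by (simp_all add: wdeg_eq_phi_exponent phi_exponent_def lookup_single)

lemma degree_identities:
  "int ((a + 1) * (c - 1)) = int p + int c - int a" "int ((c + 1) * (a - 1)) = int p + int a - int c"
proof -
  have ac_int: "int a * int c = int p + 1" unfolding of_nat_mult[symmetric] ac by simp
  have "int ((a + 1) * (c - 1)) = (int a + 1) * (int c - 1)"
    using two_le_c unfolding of_nat_mult by (simp add: of_nat_diff)
  also have "\<dots> = int a * int c - int a + int c - 1" by (simp add: algebra_simps)
  finally show "int ((a + 1) * (c - 1)) = int p + int c - int a" using ac_int by simp
  have "int ((c + 1) * (a - 1)) = (int c + 1) * (int a - 1)"
    using two_le_a unfolding of_nat_mult by (simp add: of_nat_diff)
  also have "\<dots> = int a * int c - int c + int a - 1" by (simp add: algebra_simps)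
  finally show "int ((c + 1) * (a - 1)) = int p + int a - int c" using ac_int by simp
qed

theorem homog_D2: "\<forall>i<3. \<forall>j<2. homog p b (D2 p b i j) (dg2 p b ! j - dg1 p b ! i)"
proof (intro allI impI)
  fix i j :: nat assume "i < 3" "j < 2"
  then consider "i = 0" "j = 0" | "i = 0" "j = 1" | "i = 1" "j = 0" | "i = 1" "j = 1"
    | "i = 2" "j = 0" | "i = 2" "j = 1"
    by linarith
  then show "homog p b (D2 p b i j) (dg2 p b ! j - dg1 p b ! i)"
    using degree_identities
    by cases (simp_all only: D2_eq, simp_all add: homog_ymon wdeg_single dg_eq)
qed

end

theorem corollary4p3:
  fixes p b :: nat
  assumes "prime p" and "0 < b" and "b < p"
    and "card (inv_gens p b) = 4"
  shows "range (partial1 p b) = {f. phi p b f = 0}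
       \<and> {a. partial1 p b a = 0} = range (partial2 p b)
       \<and> inj (partial2 p b)
       \<and> (\<forall>i<3. homog p b (D1 p b i) (dg1 p b ! i))
       \<and> (\<forall>i<3. \<forall>j<2. homog p b (D2 p b i j) (dg2 p b ! j - dg1 p b ! i))"
proof -
  define a c where "a = p - binv p b" and "c = p - b"
  have gens: "inv_gens p b = {(p, 0), (c, 1), (1, a), (0, p)}" and "2 \<le> c" "2 \<le> a"
    using inv_gens_card_four[OF assms] unfolding a_def c_def by simp_all
  moreover have "binv p b < p" using binv_spec[OF assms(1-3)] by simp
  ultimately interpret four_generators p b a c
  proof unfold_locales
    show "zs p b = [(p, 0), (c, 1), (1, a), (0, p)]"
      by (rule zs_of_four_generators[OF gens]) (use \<open>2 \<le> c\<close> assms(2) in \<open>simp_all add: c_def\<close>)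
    show "a * c = p + 1"
      using four_generators_product_ge[OF assms(1-3) c_def a_def \<open>2 \<le> a\<close> \<open>2 \<le> c\<close>]
        four_generators_product_le[OF assms(1-3) gens c_def a_def \<open>2 \<le> a\<close>]
      by simp
  qed (simp_all add: a_def c_def)
  show ?thesis
    using range_partial1 kernel_partial1 inj_partial2 homog_D1 homog_D2 by blast
qed

end
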